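(* Let $M\in[1,\infty[$, $L\in[1/2,\infty[$ and $T\in[0,\infty[$ with $T\ll M$, and let $h\in\mathbb Z$ and $k\in\mathbb Z_+$ be coprime; let $\overline h$ be an integer with $h\overline h\equiv1\pmod k$. Let $w$ be a weight function as described in the context. Then, for either choice of sign $\pm$, \[\int_{M/2}^{5M/2}w(x)\left|\sum_{L<n\leq2L}a(n)\,n^{-3/4}\,e\!\left(-n\,\frac{\overline h}k\right)e\!\left(\pm\frac{2\sqrt{n(x+T)}}k\right)\right|^2\mathrm dx\ll M\,L^{-1/2}+L^\varepsilon\,k\,M^{1/2+\varepsilon}.\] Moreover, if $\vartheta>0$ is fixed (and may be chosen arbitrarily small) and $L\ll M^{1-\vartheta}\,k^{-2}$, then \[\int_{M/2}^{5M/2}w(x)\left|\sum_{L<n\leq2L}a(n)\,n^{-3/4}\,e\!\left(-n\,\frac{\overline h}k\right)e\!\left(\pm\frac{2\sqrt{n(x+T)}}k\right)\right|^2\mathrm dx\ll M\,L^{-1/2}.\]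
   Context: $F$ is a fixed holomorphic cusp form of even weight $\kappa\in\mathbb Z_+$ for $\mathrm{SL}(2,\mathbb Z)$, with Fourier expansion normalized as $F(z)=\sum_{n\ge1}a(n)\,n^{(\kappa-1)/2}\,e(nz)$ for $\Im z>0$, where $e(t)=e^{2\pi i t}$. A weight function $w$ (depending on $M$) is a function in $C_c^\infty(\mathbb R_+)$ taking values in $[0,1]$, with $\mathrm{supp}\,w\subseteq[M/2,5M/2]$, $w\equiv1$ on $[M,2M]$, and $w^{(\nu)}(x)\ll_\nu M^{-\nu}$ for all $x\in\mathbb R_+$ and every integer $\nu\ge0$. The notation $f\ll g$ means $|f|\le C|g|$ for some constant $C>0$; $\varepsilon$ denotes an arbitrarily small fixed positive number, and implicit constants may depend on $\varepsilon$, $\vartheta$, $F$, the implicit constants for $w$, and the implicit constants in the hypotheses. *)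

theory Defs
  imports "HOL-Analysis.Analysis" "HOL-Number_Theory.Number_Theory"
begin

definition e :: "complex \<Rightarrow> complex" where
  "e t = exp (2 * of_real pi * \<i> * t)"

definition upper_half_plane :: "complex set" where
  "upper_half_plane = {z. Im z > 0}"

text \<open>The value a 0 is irrelevant (only a n for n >= 1 is used).\<close>
definition is_cusp_form :: "nat \<Rightarrow> (complex \<Rightarrow> complex) \<Rightarrow> (nat \<Rightarrow> complex) \<Rightarrow> bool" where
  "is_cusp_form \<kappa> F a \<longleftrightarrow>
     \<kappa> > 0 \<and> even \<kappa> \<and>
     F holomorphic_on upper_half_plane \<and>
     (\<forall>p q r s :: int. p * s - q * r = 1 \<longrightarrow>
        (\<forall>z\<in>upper_half_plane.
           F ((of_int p * z + of_int q) / (of_int r * z + of_int s))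
             = (of_int r * z + of_int s) ^ \<kappa> * F z)) \<and>
     (\<forall>z\<in>upper_half_plane.
        (\<lambda>n. if n = 0 then 0
              else a n * of_real (real n powr ((real \<kappa> - 1) / 2)) * e (of_nat n * z))
        sums F z)"

definition weight_fun :: "real \<Rightarrow> (nat \<Rightarrow> real) \<Rightarrow> (real \<Rightarrow> real) \<Rightarrow> bool" where
  "weight_fun M Cw w \<longleftrightarrow>
     (\<forall>\<nu> x. ((deriv ^^ \<nu>) w has_real_derivative (deriv ^^ Suc \<nu>) w x) (at x)) \<and>
     (\<forall>x. 0 \<le> w x \<and> w x \<le> 1) \<and>
     (\<forall>x. x < M / 2 \<or> 5 * M / 2 < x \<longrightarrow> w x = 0) \<and>
     (\<forall>x. M \<le> x \<and> x \<le> 2 * M \<longrightarrow> w x = 1) \<and>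
     (\<forall>\<nu> x. 0 < x \<longrightarrow> \<bar>(deriv ^^ \<nu>) w x\<bar> \<le> Cw \<nu> * M powr (- real \<nu>))"

definition exp_sum :: "(nat \<Rightarrow> complex) \<Rightarrow> int \<Rightarrow> int \<Rightarrow> real \<Rightarrow> real \<Rightarrow> real \<Rightarrow> real \<Rightarrow> complex" where
  "exp_sum a hb k T s L x =
     (\<Sum>n\<in>{n::nat. L < real n \<and> real n \<le> 2 * L}.
        a n * of_real (real n powr (-3/4))
          * e (of_real (- real n * real_of_int hb / real_of_int k))
          * e (of_real (s * 2 * sqrt (real n * (x + T)) / real_of_int k)))"

definition mean_square :: "(nat \<Rightarrow> complex) \<Rightarrow> int \<Rightarrow> int \<Rightarrow> real \<Rightarrow> real \<Rightarrow> real \<Rightarrow> real \<Rightarrow> (real \<Rightarrow> real) \<Rightarrow> real" where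
  "mean_square a hb k T s L M w =
     integral {M/2..5*M/2} (\<lambda>x. w x * (cmod (exp_sum a hb k T s L x))\<^sup>2)"

end

theory Submission
  imports Defs "HOL-Analysis.Kronecker_Approximation_Theorem"
begin

text \<open>Write \<open>S(x) = (\<Sum>n. b n * e (\<alpha> n * sqrt (x + T)))\<close> with \<open>b n = a n * n powr (-3/4) * e (- n * hb / k)\<close>
  and \<open>\<alpha> n = \<plusminus>2 * sqrt n / k\<close>. Expanding \<open>|S(x)|^2\<close>, a diagonal term contributes at most
  \<open>2 M |b n|^2\<close>, and for \<open>n \<noteq> m\<close> one integration by parts bounds the integral of
  \<open>w(x) e((\<alpha> n - \<alpha> m) sqrt (x + T))\<close> by a constant times \<open>k sqrt (M L) / |n - m|\<close>, because
  \<open>|sqrt n - sqrt m| \<ge> |n - m| / (2 sqrt (2 L))\<close>. Summing over \<open>m\<close> costs a harmonic sum of size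
  \<open>log L\<close>. The coefficients satisfy \<open>(\<Sum>L < n \<le> 2L. |a n|^2) = O(L)\<close>: Hecke's bound
  \<open>|F z| (Im z)^(\<kappa>/2) = O(1)\<close> (a modular substitution moves \<open>z\<close> to \<open>Im z \<ge> 1/5\<close>) combined with
  Parseval on the line \<open>Im z = 1/L\<close>. Absorbing \<open>log L\<close> into \<open>L powr \<epsilon>\<close> gives the first estimate;
  when \<open>L \<le> C M^(1-\<theta>) k^(-2)\<close> the off-diagonal part is dominated by the diagonal one.\<close>

lemma norm_e: "norm (e t) = exp (-2 * pi * Im t)"
  unfolding e_def by (simp add: norm_exp_eq_Re)

lemma norm_e_of_real [simp]: "norm (e (of_real t)) = 1"
  by (simp add: norm_e)

lemma e_add: "e (s + t) = e s * e t"
  unfolding e_def by (simp add: distrib_left exp_add)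

lemma e_of_nat_mult: "e (of_nat n * t) = e t ^ n"
  unfolding e_def by (metis exp_of_nat_mult mult.commute mult.left_commute)

lemma e_of_real_eq_1_iff: "e (of_real t) = 1 \<longleftrightarrow> (\<exists>n::int. t = of_int n)"
  unfolding e_def by (auto simp: exp_eq_1)

lemma e_mult_cnj_e: "e (of_real s) * cnj (e (of_real t)) = e (of_real (s - t))"
  unfolding e_def by (simp add: exp_cnj exp_add[symmetric] algebra_simps)

lemma e_imag: "e (\<i> * of_real y) = of_real (exp (-2 * pi * y))"
proof -
  have "2 * of_real pi * \<i> * (\<i> * of_real y) = (of_real (-2 * pi * y) :: complex)"
    by (simp add: algebra_simps)
  then show ?thesis
    unfolding e_def by (simp only: exp_of_real)
qed

lemma e_of_real_add_imag:
  "e (of_real x + \<i> * of_real y) = e (of_real x) * of_real (exp (-2 * pi * y))"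
  by (simp only: e_add e_imag)

lemma sum_e_roots_of_unity:
  fixes q :: int
  assumes J: "J > 0" and q: "\<bar>q\<bar> < int J"
  shows "(\<Sum>j<J. e (of_real (of_int q * real j / real J))) = (if q = 0 then of_nat J else 0)"
proof (cases "q = 0")
  case False
  define \<omega> where "\<omega> = e (of_real (of_int q / real J))"
  have powers: "e (of_real (of_int q * real j / real J)) = \<omega> ^ j" for j
  proof -
    have "of_real (of_int q * real j / real J) = of_nat j * (of_real (of_int q / real J) :: complex)"
      by simp
    then show ?thesis
      unfolding \<omega>_def by (simp only: e_of_nat_mult)
  qed
  have "\<omega> ^ J = 1"
    using J e_of_real_eq_1_iff[of "of_int q"] by (simp add: powers[symmetric])
  moreover have "\<omega> \<noteq> 1"
  proof
    assume "\<omega> = 1"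
    then obtain n :: int where "of_int q / real J = of_int n"
      unfolding \<omega>_def e_of_real_eq_1_iff by blast
    then have "q = n * int J"
      using J by (simp add: field_simps) (metis of_int_eq_iff of_int_mult of_int_of_nat_eq)
    with False q show False
      by (cases "n = 0") (auto simp: abs_mult)
  qed
  ultimately show ?thesis
    unfolding powers using False by (simp add: sum_gp_strict)
qed (simp add: e_def)

lemma discrete_parseval:
  fixes d :: "nat \<Rightarrow> complex"
  assumes "0 < N" "N \<le> J"
  shows "(\<Sum>j<J. (norm (\<Sum>n<N. d n * e (of_real (real n * real j / real J))))\<^sup>2)
         = real J * (\<Sum>n<N. (norm (d n))\<^sup>2)"
proof -
  define E where "E q j = e (of_real (of_int q * real j / real J))" for q :: int and j :: nat
  have cross: "(d n * e (of_real (real n * real j / real J))) * cnj (d m * e (of_real (real m * real j / real J)))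
      = d n * cnj (d m) * E (int n - int m) j" for n m j
  proof -
    have "e (of_real (real n * real j / real J)) * cnj (e (of_real (real m * real j / real J)))
        = E (int n - int m) j"
      unfolding E_def e_mult_cnj_e
      by (rule arg_cong[where f = "\<lambda>t. e (of_real t)"]) (simp add: diff_divide_distrib left_diff_distrib)
    moreover have "\<And>X Y. (d n * X) * cnj (d m * Y) = d n * cnj (d m) * (X * cnj Y)"
      by simp
    ultimately show ?thesis
      by metis
  qed
  have orth: "(\<Sum>j<J. E (int n - int m) j) = (if n = m then of_nat J else 0)"
    if "n < N" "m < N" for n m
    using sum_e_roots_of_unity[of J "int n - int m"] that assms by (simp add: E_def)
  have "complex_of_real ((norm (\<Sum>n<N. d n * e (of_real (real n * real j / real J))))\<^sup>2)
      = (\<Sum>n<N. \<Sum>m<N. d n * cnj (d m) * E (int n - int m) j)" for j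
    by (simp only: complex_norm_square cnj_sum sum_product cross)
  then have "complex_of_real (\<Sum>j<J. (norm (\<Sum>n<N. d n * e (of_real (real n * real j / real J))))\<^sup>2)
      = (\<Sum>j<J. \<Sum>n<N. \<Sum>m<N. d n * cnj (d m) * E (int n - int m) j)"
    by (simp only: of_real_sum)
  also have "\<dots> = (\<Sum>n<N. \<Sum>m<N. d n * cnj (d m) * (\<Sum>j<J. E (int n - int m) j))"
    by (simp add: sum.swap[of _ "{..<J}"] sum_distrib_left)
  also have "\<dots> = (\<Sum>n<N. d n * cnj (d n) * of_nat J)"
    by (simp add: orth if_distrib[of "\<lambda>x. _ * x"] sum.delta cong: if_cong)
  also have "\<dots> = complex_of_real (real J * (\<Sum>n<N. (norm (d n))\<^sup>2))"
    by (simp add: complex_norm_square[symmetric] sum_distrib_left ac_simps)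
  finally show ?thesis
    by (simp only: of_real_eq_iff)
qed

lemma norm_sum_lessThan_le_suminf_add_tail:
  fixes f :: "nat \<Rightarrow> 'a::banach"
  assumes "summable (\<lambda>n. norm (f n))"
  shows "norm (\<Sum>n<N. f n) \<le> norm (\<Sum>n. f n) + (\<Sum>i. norm (f (i + N)))"
proof -
  have "summable f"
    using assms by (rule summable_norm_cancel)
  then have "(\<Sum>n<N. f n) = (\<Sum>n. f n) - (\<Sum>i. f (i + N))"
    using suminf_split_initial_segment[of f N] by simp
  then have "norm (\<Sum>n<N. f n) \<le> norm (\<Sum>n. f n) + norm (\<Sum>i. f (i + N))"
    by (simp only: norm_triangle_ineq4)
  also have "norm (\<Sum>i. f (i + N)) \<le> (\<Sum>i. norm (f (i + N)))"
    using assms summable_iff_shift[of "\<lambda>n. norm (f n)" N] by (intro summable_norm) simp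
  finally show ?thesis
    by simp
qed

lemma sum_norm_fourier_coeff_sq_le_add:
  fixes d :: "nat \<Rightarrow> complex"
  assumes summable: "summable (\<lambda>n. norm (d n))"
    and bounded: "\<And>x. norm (\<Sum>n. d n * e (of_real (real n * x))) \<le> B"
    and "\<delta> > 0"
  shows "(\<Sum>n<N. (norm (d n))\<^sup>2) \<le> (B + \<delta>)\<^sup>2"
proof -
  have norm_terms: "norm (d n * e (of_real (real n * x))) = norm (d n)" for n x
    by (simp add: norm_mult norm_e)
  obtain N0 where N0: "\<And>n. n \<ge> N0 \<Longrightarrow> norm (\<Sum>i. norm (d (i + n))) < \<delta>"
    using suminf_exist_split[OF \<open>\<delta> > 0\<close> summable] by blast
  define N1 where "N1 = max N (max N0 1)"
  have N1: "N \<le> N1" "N0 \<le> N1" "0 < N1"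
    by (auto simp: N1_def)
  define P where "P x = (\<Sum>n<N1. d n * e (of_real (real n * x)))" for x
  have "norm (P x) \<le> B + \<delta>" for x
  proof -
    have "norm (P x) \<le> norm (\<Sum>n. d n * e (of_real (real n * x)))
        + (\<Sum>i. norm (d (i + N1) * e (of_real (real (i + N1) * x))))"
      unfolding P_def by (rule norm_sum_lessThan_le_suminf_add_tail) (simp only: norm_terms summable)
    also have "(\<Sum>i. norm (d (i + N1) * e (of_real (real (i + N1) * x)))) = (\<Sum>i. norm (d (i + N1)))"
      by (simp only: norm_terms)
    also have "(\<Sum>i. norm (d (i + N1))) \<le> \<delta>"
      using N0[OF N1(2)] by simp
    finally show ?thesis
      using bounded[of x] by linarith
  qed
  then have "(\<Sum>j<N1. (norm (P (real j / real N1)))\<^sup>2) \<le> real N1 * (B + \<delta>)\<^sup>2"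
    using sum_mono[of "{..<N1}" "\<lambda>j. (norm (P (real j / real N1)))\<^sup>2" "\<lambda>_. (B + \<delta>)\<^sup>2"]
    by (simp add: power_mono)
  moreover have "real N1 * (\<Sum>n<N1. (norm (d n))\<^sup>2) = (\<Sum>j<N1. (norm (P (real j / real N1)))\<^sup>2)"
    using discrete_parseval[OF N1(3) order_refl, of d] by (simp add: P_def)
  ultimately have "real N1 * (\<Sum>n<N1. (norm (d n))\<^sup>2) \<le> real N1 * (B + \<delta>)\<^sup>2"
    by linarith
  then have "(\<Sum>n<N1. (norm (d n))\<^sup>2) \<le> (B + \<delta>)\<^sup>2"
    using N1(3) by (simp add: mult_le_cancel_left_pos)
  moreover have "(\<Sum>n<N. (norm (d n))\<^sup>2) \<le> (\<Sum>n<N1. (norm (d n))\<^sup>2)"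
    using N1(1) by (intro sum_mono2) auto
  ultimately show ?thesis
    by linarith
qed

lemma bessel_inequality_bounded_fourier_series:
  fixes d :: "nat \<Rightarrow> complex"
  assumes "summable (\<lambda>n. norm (d n))"
    and "\<And>x. norm (\<Sum>n. d n * e (of_real (real n * x))) \<le> B"
  shows "(\<Sum>n<N. (norm (d n))\<^sup>2) \<le> B\<^sup>2"
proof -
  have "((\<lambda>\<delta>. (B + \<delta>)\<^sup>2) \<longlongrightarrow> (B + 0)\<^sup>2) (at_right 0)"
    by (intro tendsto_intros)
  then have "((\<lambda>\<delta>. (B + \<delta>)\<^sup>2) \<longlongrightarrow> B\<^sup>2) (at_right 0)"
    by simp
  then show ?thesis
    by (rule tendsto_lowerbound)
      (auto intro: eventually_mono[OF eventually_at_right_less] sum_norm_fourier_coeff_sq_le_add assms)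
qed

section \<open>Hecke's bound and the mean square of the coefficients\<close>

definition dyadic :: "real \<Rightarrow> nat set" where
  "dyadic L = {n. L < real n \<and> real n \<le> 2 * L}"

lemma dyadic_subset_atMost: "dyadic L \<subseteq> {..nat \<lfloor>2 * L\<rfloor>}"
  unfolding dyadic_def by (auto simp: le_nat_iff le_floor_iff)

lemma finite_dyadic [simp]: "finite (dyadic L)"
  using dyadic_subset_atMost finite_subset by blast

definition fourier_coeff :: "nat \<Rightarrow> (nat \<Rightarrow> complex) \<Rightarrow> nat \<Rightarrow> complex" where
  "fourier_coeff \<kappa> a n = (if n = 0 then 0 else a n * of_real (real n powr ((real \<kappa> - 1) / 2)))"

lemma cusp_form_sums:
  assumes "is_cusp_form \<kappa> F a" "Im z > 0"
  shows "(\<lambda>n. fourier_coeff \<kappa> a n * e (of_nat n * z)) sums F z"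
proof -
  have "(\<lambda>n. fourier_coeff \<kappa> a n * e (of_nat n * z))
      = (\<lambda>n. if n = 0 then 0 else a n * of_real (real n powr ((real \<kappa> - 1) / 2)) * e (of_nat n * z))"
    by (auto simp: fourier_coeff_def fun_eq_iff)
  with assms show ?thesis
    unfolding is_cusp_form_def upper_half_plane_def by auto
qed

lemma cusp_form_summable_norm:
  assumes cusp: "is_cusp_form \<kappa> F a" and "y > 0"
  shows "summable (\<lambda>n. norm (fourier_coeff \<kappa> a n) * exp (-2 * pi * real n * y))"
proof -
  define q where "q t = (of_real (exp (-2 * pi * t)) :: complex)" for t
  have "summable (\<lambda>n. fourier_coeff \<kappa> a n * e (of_nat n * (\<i> * of_real (y / 2))))"
    using cusp_form_sums[OF cusp, of "\<i> * of_real (y / 2)"] \<open>y > 0\<close> sums_summable by auto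
  then have "summable (\<lambda>n. fourier_coeff \<kappa> a n * q (y / 2) ^ n)"
    unfolding e_of_nat_mult e_imag q_def .
  moreover have "norm (q y) < norm (q (y / 2))"
    using \<open>y > 0\<close> by (simp add: q_def)
  ultimately have "summable (\<lambda>n. norm (fourier_coeff \<kappa> a n * q y ^ n))"
    by (rule powser_insidea)
  then show ?thesis
    by (simp add: q_def norm_mult norm_power exp_of_nat_mult[symmetric] algebra_simps)
qed

lemma
  fixes p q r s :: int
  assumes det: "p * s - q * r = 1" and z: "Im z > 0"
  shows moebius_denom_nonzero: "of_int r * z + of_int s \<noteq> 0"
    and Im_moebius: "Im ((of_int p * z + of_int q) / (of_int r * z + of_int s))
                       = Im z / (norm (of_int r * z + of_int s))\<^sup>2"
proof -
  show "of_int r * z + of_int s \<noteq> 0"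
  proof
    assume denom: "of_int r * z + of_int s = 0"
    have "Im (of_int r * z + of_int s) = 0"
      by (simp only: denom) simp
    then have "of_int r * Im z = 0"
      by simp
    then have "r = 0"
      using z by simp
    with denom det show False by simp
  qed
  have "Im (of_int p * z + of_int q) * Re (of_int r * z + of_int s)
      - Re (of_int p * z + of_int q) * Im (of_int r * z + of_int s) = Im z * of_int (p * s - q * r)"
    by (simp add: algebra_simps)
  then show "Im ((of_int p * z + of_int q) / (of_int r * z + of_int s))
      = Im z / (norm (of_int r * z + of_int s))\<^sup>2"
    using det by (simp add: Im_divide')
qed

lemma cusp_form_norm_mult_Im_power_moebius:
  assumes cusp: "is_cusp_form \<kappa> F a" and det: "p * s - q * r = 1" and z: "Im z > 0"
  defines "w \<equiv> (of_int p * z + of_int q) / (of_int r * z + of_int s)"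
  shows "norm (F w) * Im w ^ (\<kappa> div 2) = norm (F z) * Im z ^ (\<kappa> div 2)"
proof -
  define v where "v = of_int r * z + of_int s"
  have "v \<noteq> 0" and Im_w: "Im w = Im z / (norm v)\<^sup>2"
    using moebius_denom_nonzero[OF det z] Im_moebius[OF det z] by (auto simp: v_def w_def)
  have "\<kappa> = 2 * (\<kappa> div 2)"
    using cusp unfolding is_cusp_form_def by auto
  moreover have "F w = v ^ \<kappa> * F z"
    using cusp det z unfolding is_cusp_form_def upper_half_plane_def w_def v_def by auto
  ultimately have "norm (F w) = ((norm v)\<^sup>2) ^ (\<kappa> div 2) * norm (F z)"
    by (metis norm_mult norm_power power_mult)
  then show ?thesis
    using \<open>v \<noteq> 0\<close> by (simp add: Im_w power_divide)
qed

text \<open>Dirichlet's theorem with \<open>N = \<lfloor>1 / sqrt y\<rfloor>\<close> gives \<open>|k x - h| < 1 / N \<le> 2 sqrt y\<close> and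
  \<open>k y \<le> N y \<le> sqrt y\<close>.\<close>
lemma exists_coprime_small_denominator:
  fixes x y :: real
  assumes y: "0 < y" "y < 1/4"
  obtains h k :: int where "coprime h k" "(of_int k * x - of_int h)\<^sup>2 + (of_int k * y)\<^sup>2 \<le> 5 * y"
proof -
  define t where "t = 1 / sqrt y"
  have t2: "t\<^sup>2 * y = 1"
    using y by (simp add: t_def power_divide)
  have "sqrt y < sqrt (1/4)"
    using y by (intro real_sqrt_less_mono) auto
  then have "t > 2"
    using y by (simp add: t_def real_sqrt_divide field_simps)
  define N where "N = nat \<lfloor>t\<rfloor>"
  have N: "real N \<le> t" "t < real N + 1" "N > 0"
    using \<open>t > 2\<close> by (auto simp: N_def)
  obtain h k where hk: "coprime h k" "0 < k" "k \<le> int N" "\<bar>of_int k * x - of_int h\<bar> < 1 / real N"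
    using Dirichlet_approx_coprime[OF \<open>N > 0\<close>] by blast
  have "1 / real N \<le> 2 / t"
    using N \<open>t > 2\<close> by (simp add: field_simps)
  with hk(4) have "\<bar>of_int k * x - of_int h\<bar> \<le> 2 / t"
    by linarith
  then have "(of_int k * x - of_int h)\<^sup>2 \<le> (2 / t)\<^sup>2"
    by (metis abs_ge_zero power2_abs power_mono)
  also have "(2 / t)\<^sup>2 = 4 * y"
    using t2 \<open>t > 2\<close> by (simp add: power_divide field_simps)
  finally have approx: "(of_int k * x - of_int h)\<^sup>2 \<le> 4 * y" .
  have "of_int k * y \<le> t * y"
    using hk(3) N(1) y by (intro mult_right_mono) linarith+
  then have "(of_int k * y)\<^sup>2 \<le> (t * y)\<^sup>2"
    using hk(2) y by (intro power_mono) auto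
  also have "(t * y)\<^sup>2 = y"
    using t2 by (simp add: power_mult_distrib power2_eq_square)
  finally have "(of_int k * x - of_int h)\<^sup>2 + (of_int k * y)\<^sup>2 \<le> 5 * y"
    using approx by linarith
  with hk(1) show ?thesis
    using that by blast
qed

lemma exists_moebius_Im_ge:
  assumes z: "Im z > 0"
  obtains p q r s :: int where "p * s - q * r = 1"
    "Im ((of_int p * z + of_int q) / (of_int r * z + of_int s)) \<ge> 1/5"
proof (cases "Im z \<ge> 1/5")
  case True
  then show ?thesis
    by (intro that[where p = 1 and q = 0 and r = 0 and s = 1]) simp_all
next
  case False
  then have "Im z < 1/4"
    by simp
  then obtain h k where "coprime h k"
    and close: "(of_int k * Re z - of_int h)\<^sup>2 + (of_int k * Im z)\<^sup>2 \<le> 5 * Im z"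
    using exists_coprime_small_denominator[of "Im z" "Re z"] z by blast
  obtain u v where uv: "u * k + v * h = 1"
    using \<open>coprime h k\<close> by (metis bezout_int coprime_iff_gcd_eq_1 gcd.commute)
  have det: "(- v) * (- h) - (- u) * k = 1"
    using uv by (simp add: algebra_simps)
  have "(norm (of_int k * z + of_int (- h)))\<^sup>2 \<le> 5 * Im z"
    using close by (simp add: cmod_power2)
  moreover have "(norm (of_int k * z + of_int (- h)))\<^sup>2 > 0"
    using moebius_denom_nonzero[OF det z] by simp
  ultimately have "1/5 \<le> Im z / (norm (of_int k * z + of_int (- h)))\<^sup>2"
    using z by (simp add: field_simps)
  then have "Im ((of_int (- v) * z + of_int (- u)) / (of_int k * z + of_int (- h))) \<ge> 1/5"
    by (simp only: Im_moebius[OF det z])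
  with det show ?thesis
    using that by blast
qed

lemma pow_le_fact_mult_exp:
  fixes x :: real
  assumes "x \<ge> 0"
  shows "x ^ m \<le> fact m * exp x"
proof -
  have "(\<lambda>n. x ^ n / fact n) sums exp x"
    using exp_converges[of x] by (simp add: divide_inverse mult.commute)
  then have "x ^ m / fact m \<le> exp x"
    using assms sum_le_suminf[of "\<lambda>n. x ^ n / fact n" "{m}"] by (simp add: sums_iff)
  then show ?thesis
    by (simp add: field_simps)
qed

lemma exp_mult_le_exp_mult_exp:
  fixes v t :: real
  assumes "v \<ge> 1/10" "t \<ge> 1"
  shows "exp (-2 * pi * t * v) \<le> exp (-2 * pi * t / 10) * exp (2 * pi / 10 - 2 * pi * v)"
proof -
  have "0 \<le> 2 * pi * ((t - 1) * (v - 1/10))"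
    using assms by simp
  moreover have "-2 * pi * t * v = -2 * pi * t / 10 + (2 * pi / 10 - 2 * pi * v) - 2 * pi * ((t - 1) * (v - 1/10))"
    by (simp add: field_simps)
  ultimately have "-2 * pi * t * v \<le> -2 * pi * t / 10 + (2 * pi / 10 - 2 * pi * v)"
    by linarith
  then show ?thesis
    by (simp add: exp_add[symmetric])
qed

lemma cusp_form_norm_le_exp_Im:
  assumes cusp: "is_cusp_form \<kappa> F a" and w: "Im w \<ge> 1/5"
  shows "norm (F w) \<le> (\<Sum>n. norm (fourier_coeff \<kappa> a n) * exp (-2 * pi * real n / 10))
                        * exp (2 * pi / 10 - 2 * pi * Im w)"
proof -
  define c where "c n = norm (fourier_coeff \<kappa> a n)" for n
  define v where "v = Im w"
  have "v > 0"
    using w by (simp add: v_def)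
  have summable: "summable (\<lambda>n. c n * exp (-2 * pi * real n * y))" if "y > 0" for y
    using cusp_form_summable_norm[OF cusp that] by (simp add: c_def)
  have summable_10: "summable (\<lambda>n. c n * exp (-2 * pi * real n / 10))"
    using summable[of "1/10"] by simp
  have norm_terms: "norm (fourier_coeff \<kappa> a n * e (of_nat n * w)) = c n * exp (-2 * pi * real n * v)" for n
    by (simp add: norm_mult norm_e c_def v_def)
  have "F w = (\<Sum>n. fourier_coeff \<kappa> a n * e (of_nat n * w))"
    using cusp_form_sums[OF cusp] \<open>v > 0\<close> by (simp add: sums_iff v_def)
  also have "norm \<dots> \<le> (\<Sum>n. norm (fourier_coeff \<kappa> a n * e (of_nat n * w)))"
    by (rule summable_norm) (simp only: norm_terms summable[OF \<open>v > 0\<close>])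
  also have "\<dots> = (\<Sum>n. c n * exp (-2 * pi * real n * v))"
    by (simp only: norm_terms)
  also have "\<dots> \<le> (\<Sum>n. c n * exp (-2 * pi * real n / 10) * exp (2 * pi / 10 - 2 * pi * v))"
  proof (rule suminf_le)
    show "c n * exp (-2 * pi * real n * v) \<le> c n * exp (-2 * pi * real n / 10) * exp (2 * pi / 10 - 2 * pi * v)"
      for n
    proof (cases "n = 0")
      case False
      then have "real n \<ge> 1"
        by simp
      have "v \<ge> 1/10"
        using w by (simp add: v_def)
      from exp_mult_le_exp_mult_exp[OF this \<open>real n \<ge> 1\<close>]
      show ?thesis
        by (simp add: c_def mult.assoc mult_left_mono)
    qed (simp add: c_def fourier_coeff_def)
  qed (use summable[OF \<open>v > 0\<close>] summable_10 in \<open>auto intro: summable_mult2\<close>)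
  also have "\<dots> = (\<Sum>n. c n * exp (-2 * pi * real n / 10)) * exp (2 * pi / 10 - 2 * pi * v)"
    by (rule suminf_mult2[OF summable_10, symmetric])
  finally show ?thesis
    by (simp add: c_def v_def)
qed

lemma cusp_form_bounded_Im_ge:
  assumes cusp: "is_cusp_form \<kappa> F a"
  obtains K where "\<And>w. Im w \<ge> 1/5 \<Longrightarrow> norm (F w) * Im w ^ (\<kappa> div 2) \<le> K"
proof
  define m where "m = \<kappa> div 2"
  define A where "A = (\<Sum>n. norm (fourier_coeff \<kappa> a n) * exp (-2 * pi * real n / 10))"
  have "A \<ge> 0"
    unfolding A_def using cusp_form_summable_norm[OF cusp, of "1/10"]
    by (intro suminf_nonneg) auto
  fix w :: complex
  assume w: "Im w \<ge> 1/5"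
  define v where "v = Im w"
  have "v > 0"
    using w by (simp add: v_def)
  have "v ^ m \<le> fact m * exp v"
    using pow_le_fact_mult_exp \<open>v > 0\<close> by simp
  also have "\<dots> \<le> fact m * exp (2 * pi * v)"
    using \<open>v > 0\<close> pi_gt3 by simp
  finally have "v ^ m * exp (- 2 * pi * v) \<le> fact m"
    by (simp add: exp_minus field_simps)
  have "norm (F w) * v ^ m \<le> A * exp (2 * pi / 10 - 2 * pi * v) * v ^ m"
    using cusp_form_norm_le_exp_Im[OF cusp w] \<open>v > 0\<close> by (simp add: A_def v_def mult_right_mono)
  also have "exp (2 * pi / 10 - 2 * pi * v) = exp (2 * pi / 10) * exp (- 2 * pi * v)"
    by (simp only: exp_add[symmetric]) simp
  also have "A * (exp (2 * pi / 10) * exp (- 2 * pi * v)) * v ^ m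
      = A * exp (2 * pi / 10) * (v ^ m * exp (- 2 * pi * v))"
    by (simp only: ac_simps)
  also have "\<dots> \<le> A * exp (2 * pi / 10) * fact m"
    using \<open>v ^ m * exp (- 2 * pi * v) \<le> fact m\<close> \<open>A \<ge> 0\<close> by (simp add: mult_left_mono)
  finally show "norm (F w) * Im w ^ (\<kappa> div 2) \<le> A * exp (2 * pi / 10) * fact m"
    by (simp add: v_def m_def)
qed

lemma cusp_form_hecke_bound:
  assumes cusp: "is_cusp_form \<kappa> F a"
  obtains K where "\<And>z. Im z > 0 \<Longrightarrow> norm (F z) * Im z ^ (\<kappa> div 2) \<le> K"
proof -
  obtain K where K: "\<And>w. Im w \<ge> 1/5 \<Longrightarrow> norm (F w) * Im w ^ (\<kappa> div 2) \<le> K"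
    using cusp_form_bounded_Im_ge[OF cusp] by blast
  have "norm (F z) * Im z ^ (\<kappa> div 2) \<le> K" if z: "Im z > 0" for z
  proof -
    obtain p q r s :: int where det: "p * s - q * r = 1"
      and "Im ((of_int p * z + of_int q) / (of_int r * z + of_int s)) \<ge> 1/5"
      using exists_moebius_Im_ge[OF z] by blast
    then show ?thesis
      using K cusp_form_norm_mult_Im_power_moebius[OF cusp det z] by metis
  qed
  then show ?thesis
    using that by blast
qed

lemma cusp_form_coeff_sum_sq_le:
  assumes cusp: "is_cusp_form \<kappa> F a"
    and hecke: "\<And>z. Im z > 0 \<Longrightarrow> norm (F z) * Im z ^ (\<kappa> div 2) \<le> K"
    and y: "y > 0"
  shows "(\<Sum>n<N. (norm (fourier_coeff \<kappa> a n) * exp (-2 * pi * real n * y))\<^sup>2) \<le> (K / y ^ (\<kappa> div 2))\<^sup>2"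
proof -
  define d where "d n = fourier_coeff \<kappa> a n * of_real (exp (-2 * pi * real n * y))" for n
  have norm_d: "norm (d n) = norm (fourier_coeff \<kappa> a n) * exp (-2 * pi * real n * y)" for n
    by (simp add: d_def norm_mult)
  have "summable (\<lambda>n. norm (d n))"
    unfolding norm_d by (rule cusp_form_summable_norm[OF cusp y])
  moreover have "norm (\<Sum>n. d n * e (of_real (real n * x))) \<le> K / y ^ (\<kappa> div 2)" for x
  proof -
    have "d n * e (of_real (real n * x)) = fourier_coeff \<kappa> a n * e (of_nat n * (of_real x + \<i> * of_real y))"
      for n
    proof -
      have "of_nat n * (of_real x + \<i> * of_real y) = of_real (real n * x) + \<i> * of_real (real n * y)"
        by (simp add: algebra_simps)
      then show ?thesis
        unfolding d_def by (simp only: e_of_real_add_imag) (simp add: ac_simps)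
    qed
    then have "(\<Sum>n. d n * e (of_real (real n * x))) = F (of_real x + \<i> * of_real y)"
      using cusp_form_sums[OF cusp, of "of_real x + \<i> * of_real y"] y by (simp add: sums_iff)
    moreover have "norm (F (of_real x + \<i> * of_real y)) * y ^ (\<kappa> div 2) \<le> K"
      using hecke[of "of_real x + \<i> * of_real y"] y by simp
    ultimately show ?thesis
      using y by (simp add: field_simps)
  qed
  ultimately have "(\<Sum>n<N. (norm (d n))\<^sup>2) \<le> (K / y ^ (\<kappa> div 2))\<^sup>2"
    by (rule bessel_inequality_bounded_fourier_series)
  then show ?thesis
    by (simp only: norm_d)
qed

lemma norm_sq_le_fourier_coeff_dyadic:
  assumes \<kappa>: "\<kappa> \<ge> 1" and L: "L > 0" and n: "n \<in> dyadic L"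
  shows "(norm (a n))\<^sup>2 * (L powr (real \<kappa> - 1) * exp (- (8 * pi)))
           \<le> (norm (fourier_coeff \<kappa> a n) * exp (-2 * pi * real n * (1 / L)))\<^sup>2"
proof -
  have n_bounds: "L < real n" "real n \<le> 2 * L"
    using n by (auto simp: dyadic_def)
  then have "n > 0"
    using L by (cases n) auto
  have "(real n powr ((real \<kappa> - 1) / 2))\<^sup>2 = real n powr (real \<kappa> - 1)"
    by (simp add: power2_eq_square powr_add[symmetric])
  then have coeff: "(norm (fourier_coeff \<kappa> a n))\<^sup>2 = (norm (a n))\<^sup>2 * real n powr (real \<kappa> - 1)"
    using \<open>n > 0\<close> by (simp add: fourier_coeff_def norm_mult power_mult_distrib)
  have "L powr (real \<kappa> - 1) \<le> real n powr (real \<kappa> - 1)"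
    using n_bounds L \<kappa> by (intro powr_mono2) auto
  moreover have "exp (- (8 * pi)) \<le> (exp (-2 * pi * real n * (1 / L)))\<^sup>2"
    using n_bounds L by (simp add: exp_double[symmetric] field_simps)
  ultimately have "L powr (real \<kappa> - 1) * exp (- (8 * pi))
      \<le> real n powr (real \<kappa> - 1) * (exp (-2 * pi * real n * (1 / L)))\<^sup>2"
    by (intro mult_mono) auto
  then show ?thesis
    by (simp add: power_mult_distrib coeff mult_left_mono mult.assoc)
qed

lemma cusp_form_dyadic_sum_sq_le:
  assumes cusp: "is_cusp_form \<kappa> F a"
  obtains A where "\<And>L. L > 0 \<Longrightarrow> (\<Sum>n\<in>dyadic L. (norm (a n))\<^sup>2) \<le> A * L"
proof -
  obtain K where hecke: "\<And>z. Im z > 0 \<Longrightarrow> norm (F z) * Im z ^ (\<kappa> div 2) \<le> K"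
    using cusp_form_hecke_bound[OF cusp] by blast
  have "even \<kappa>" "\<kappa> > 0"
    using cusp unfolding is_cusp_form_def by auto
  then obtain m where m: "\<kappa> = 2 * m"
    by blast
  have "(\<Sum>n\<in>dyadic L. (norm (a n))\<^sup>2) \<le> K\<^sup>2 * exp (8 * pi) * L" if L: "L > 0" for L
  proof -
    define N where "N = Suc (nat \<lfloor>2 * L\<rfloor>)"
    have "dyadic L \<subseteq> {..<N}"
      using dyadic_subset_atMost[of L] by (auto simp: N_def less_Suc_eq_le)
    have "(\<Sum>n\<in>dyadic L. (norm (a n))\<^sup>2) * (L powr (real \<kappa> - 1) * exp (- (8 * pi)))
        \<le> (\<Sum>n\<in>dyadic L. (norm (fourier_coeff \<kappa> a n) * exp (-2 * pi * real n * (1 / L)))\<^sup>2)"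
      unfolding sum_distrib_right using \<open>\<kappa> > 0\<close> L
      by (intro sum_mono norm_sq_le_fourier_coeff_dyadic) auto
    also have "\<dots> \<le> (\<Sum>n<N. (norm (fourier_coeff \<kappa> a n) * exp (-2 * pi * real n * (1 / L)))\<^sup>2)"
      using \<open>dyadic L \<subseteq> {..<N}\<close> by (intro sum_mono2) auto
    also have "\<dots> \<le> (K / (1 / L) ^ (\<kappa> div 2))\<^sup>2"
      using L by (intro cusp_form_coeff_sum_sq_le[OF cusp hecke]) auto
    also have "\<dots> = K\<^sup>2 * L ^ \<kappa>"
      using L by (simp add: m power_divide power_mult_distrib power_mult[symmetric] mult.commute)
    also have "L ^ \<kappa> = L powr (real \<kappa> - 1) * L"
      using L powr_add[of L "real \<kappa> - 1" 1] by (simp add: powr_realpow[symmetric])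
    finally have bound: "(\<Sum>n\<in>dyadic L. (norm (a n))\<^sup>2) * (L powr (real \<kappa> - 1) * exp (- (8 * pi)))
        \<le> K\<^sup>2 * (L powr (real \<kappa> - 1) * L)" .
    have pos: "L powr (real \<kappa> - 1) * exp (- (8 * pi)) > 0"
      using L by simp
    have "(\<Sum>n\<in>dyadic L. (norm (a n))\<^sup>2)
        \<le> K\<^sup>2 * (L powr (real \<kappa> - 1) * L) / (L powr (real \<kappa> - 1) * exp (- (8 * pi)))"
      by (subst pos_le_divide_eq[OF pos]) (rule bound)
    also have "\<dots> = K\<^sup>2 * exp (8 * pi) * L"
      using L by (simp add: exp_minus field_simps)
    finally show ?thesis .
  qed
  then show ?thesis
    using that by blast
qed

section \<open>The weight function and the first derivative test\<close>

lemma weight_fun_has_derivative: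
  assumes "weight_fun M Cw w"
  shows "(w has_real_derivative deriv w x) (at x)"
proof -
  have "((deriv ^^ 0) w has_real_derivative (deriv ^^ Suc 0) w x) (at x)"
    using assms unfolding weight_fun_def by blast
  then show ?thesis
    by simp
qed

lemma weight_fun_continuous_on:
  assumes "weight_fun M Cw w"
  shows "continuous_on A w"
  using weight_fun_has_derivative[OF assms] by (meson DERIV_isCont continuous_at_imp_continuous_on)

lemma weight_fun_nonneg: "weight_fun M Cw w \<Longrightarrow> 0 \<le> w x"
  and weight_fun_le_1: "weight_fun M Cw w \<Longrightarrow> w x \<le> 1"
  unfolding weight_fun_def by auto

lemma weight_fun_endpoints:
  assumes wf: "weight_fun M Cw w"
  shows "w (M/2) = 0" "w (5*M/2) = 0"
proof -
  have vanish: "w x = 0" if "x < M/2 \<or> 5 * M / 2 < x" for x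
    using wf that unfolding weight_fun_def by blast
  show "w (M/2) = 0"
    by (rule continuous_constant_on_closure[of "{..<M/2}" w 0])
      (use vanish weight_fun_continuous_on[OF wf] in auto)
  show "w (5*M/2) = 0"
    by (rule continuous_constant_on_closure[of "{5*M/2<..}" w 0])
      (use vanish weight_fun_continuous_on[OF wf] in auto)
qed

lemma weight_fun_deriv_bound:
  assumes wf: "weight_fun M Cw w" and "M > 0" "x > 0"
  shows "\<bar>deriv w x\<bar> \<le> \<bar>Cw 1\<bar> / M"
proof -
  have "\<bar>(deriv ^^ 1) w x\<bar> \<le> Cw 1 * M powr (- real 1)"
    using wf \<open>x > 0\<close> unfolding weight_fun_def by blast
  also have "\<dots> \<le> \<bar>Cw 1\<bar> / M"
    using \<open>M > 0\<close> by (simp add: powr_minus divide_inverse)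
  finally show ?thesis
    by simp
qed

lemma has_vector_derivative_e_phase:
  assumes "(\<phi> has_real_derivative \<phi>' x) (at x)"
  shows "((\<lambda>x. e (of_real (\<beta> * \<phi> x))) has_vector_derivative
           of_real (\<phi>' x) * (2 * of_real pi * \<i> * of_real \<beta> * e (of_real (\<beta> * \<phi> x)))) (at x)"
proof -
  define c :: complex where "c = 2 * of_real pi * \<i> * of_real \<beta>"
  have e_eq: "e (of_real (\<beta> * \<phi> x)) = exp (c * of_real (\<phi> x))" for x
    by (simp add: e_def c_def ac_simps)
  have "((\<lambda>x. exp (c * of_real (\<phi> x))) has_vector_derivative
      of_real (\<phi>' x) * (c * exp (c * of_real (\<phi> x)))) (at x)"
    using has_vector_derivative_of_real[OF assms]
    by (rule field_vector_diff_chain_at[unfolded o_def]) (auto intro!: derivative_eq_intros)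
  then show ?thesis
    by (simp only: e_eq c_def[symmetric])
qed

lemma has_integral_e_phase_by_parts:
  fixes p p' \<phi> \<phi>' :: "real \<Rightarrow> real"
  assumes ab: "a \<le> b"
    and p: "\<And>x. x \<in> {a..b} \<Longrightarrow> (p has_real_derivative p' x) (at x)"
    and \<phi>: "\<And>x. x \<in> {a..b} \<Longrightarrow> (\<phi> has_real_derivative \<phi>' x) (at x)"
    and \<phi>'_cont: "continuous_on {a..b} \<phi>'"
    and ends: "p a = 0" "p b = 0"
  shows "((\<lambda>x. of_real (p' x) * e (of_real (\<beta> * \<phi> x))) has_integral
           - (2 * of_real pi * \<i> * of_real \<beta>) * integral {a..b} (\<lambda>x. of_real (p x * \<phi>' x) * e (of_real (\<beta> * \<phi> x))))
           {a..b}"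
proof -
  define c :: complex where "c = 2 * of_real pi * \<i> * of_real \<beta>"
  define E where "E x = e (of_real (\<beta> * \<phi> x))" for x
  define f where "f x = of_real (p x * \<phi>' x) * E x" for x
  define h where "h x = of_real (p' x) * E x" for x
  have E_deriv: "(E has_vector_derivative of_real (\<phi>' x) * (c * E x)) (at x)" if "x \<in> {a..b}" for x
    unfolding E_def[abs_def] c_def by (rule has_vector_derivative_e_phase) (rule \<phi>[OF that])
  have g_deriv: "((\<lambda>x. of_real (p x) * E x) has_vector_derivative c * f x + h x) (at x)"
    if "x \<in> {a..b}" for x
  proof -
    have "((\<lambda>x. of_real (p x) * E x) has_vector_derivative
        of_real (p x) * (of_real (\<phi>' x) * (c * E x)) + of_real (p' x) * E x) (at x)"
      by (intro has_vector_derivative_mult has_vector_derivative_of_real p E_deriv that)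
    moreover have "of_real (p x) * (of_real (\<phi>' x) * (c * E x)) + of_real (p' x) * E x = c * f x + h x"
      by (simp add: f_def h_def mult_ac)
    ultimately show ?thesis
      by (simp only:)
  qed
  have "((\<lambda>x. c * f x + h x) has_integral of_real (p b) * E b - of_real (p a) * E a) {a..b}"
    using g_deriv by (intro fundamental_theorem_of_calculus[OF ab]) (auto intro: has_vector_derivative_at_within)
  then have "((\<lambda>x. c * f x + h x) has_integral 0) {a..b}"
    by (simp add: ends)
  moreover have "continuous_on {a..b} p" "continuous_on {a..b} \<phi>"
    using p \<phi> by (meson DERIV_isCont continuous_at_imp_continuous_on)+
  then have "continuous_on {a..b} f"
    unfolding f_def E_def e_def using \<phi>'_cont by (intro continuous_intros)
  then have "((\<lambda>x. c * f x) has_integral c * integral {a..b} f) {a..b}"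
    by (intro has_integral_mult_right integrable_integral integrable_continuous_interval)
  ultimately have "((\<lambda>x. (c * f x + h x) - c * f x) has_integral 0 - c * integral {a..b} f) {a..b}"
    by (rule has_integral_diff)
  then have "(h has_integral - (c * integral {a..b} f)) {a..b}"
    by simp
  then show ?thesis
    unfolding h_def[abs_def] f_def[abs_def] E_def c_def by (simp only: minus_mult_left)
qed

lemma norm_integral_e_by_parts_le:
  fixes p p' \<phi> \<phi>' :: "real \<Rightarrow> real"
  assumes ab: "a \<le> b" and \<beta>: "\<beta> \<noteq> 0"
    and p: "\<And>x. x \<in> {a..b} \<Longrightarrow> (p has_real_derivative p' x) (at x)"
    and \<phi>: "\<And>x. x \<in> {a..b} \<Longrightarrow> (\<phi> has_real_derivative \<phi>' x) (at x)"
    and \<phi>'_cont: "continuous_on {a..b} \<phi>'"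
    and ends: "p a = 0" "p b = 0"
    and p'_le: "\<And>x. x \<in> {a..b} \<Longrightarrow> \<bar>p' x\<bar> \<le> B"
  shows "norm (integral {a..b} (\<lambda>x. of_real (p x * \<phi>' x) * e (of_real (\<beta> * \<phi> x))))
           \<le> (b - a) * B / (2 * pi * \<bar>\<beta>\<bar>)"
proof -
  define I where "I = integral {a..b} (\<lambda>x. of_real (p x * \<phi>' x) * e (of_real (\<beta> * \<phi> x)))"
  have "B \<ge> 0"
    using p'_le[of a] ab by force
  have "norm (- (2 * of_real pi * \<i> * of_real \<beta>) * I) \<le> B * measure lborel {a..b}"
    unfolding I_def
    by (rule has_integral_bound_real[OF \<open>B \<ge> 0\<close> finite.emptyI has_integral_e_phase_by_parts[OF ab p \<phi> \<phi>'_cont ends]])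
      (auto simp: norm_mult norm_e intro!: p'_le)
  then have "2 * pi * \<bar>\<beta>\<bar> * norm I \<le> B * (b - a)"
    using ab by (simp add: norm_mult)
  then show ?thesis
    using \<beta> by (simp add: I_def field_simps)
qed

definition sqrt_phase_integral :: "real \<Rightarrow> real \<Rightarrow> (real \<Rightarrow> real) \<Rightarrow> real \<Rightarrow> complex" where
  "sqrt_phase_integral M T w \<beta> = integral {M/2..5*M/2} (\<lambda>x. of_real (w x) * e (of_real (\<beta> * sqrt (x + T))))"

lemma has_integral_sqrt_phase_integral:
  assumes "weight_fun M Cw w"
  shows "((\<lambda>x. of_real (w x) * e (of_real (\<beta> * sqrt (x + T)))) has_integral sqrt_phase_integral M T w \<beta>)
           {M/2..5*M/2}"
proof -
  have "continuous_on {M/2..5*M/2} (\<lambda>x. of_real (w x) * e (of_real (\<beta> * sqrt (x + T))))"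
    unfolding e_def using weight_fun_continuous_on[OF assms] by (intro continuous_intros)
  then show ?thesis
    unfolding sqrt_phase_integral_def by (simp add: integrable_continuous_interval integrable_integral)
qed

lemma norm_sqrt_phase_integral_le:
  assumes wf: "weight_fun M Cw w" and "M \<ge> 0"
  shows "norm (sqrt_phase_integral M T w \<beta>) \<le> 2 * M"
proof -
  have "norm (sqrt_phase_integral M T w \<beta>) \<le> 1 * measure lborel {M/2..5*M/2}"
    by (rule has_integral_bound_real[OF _ finite.emptyI has_integral_sqrt_phase_integral[OF wf]])
      (auto simp: norm_mult weight_fun_nonneg[OF wf] weight_fun_le_1[OF wf] norm_e)
  then show ?thesis
    using \<open>M \<ge> 0\<close> by simp
qed

lemma weight_fun_sqrt_deriv_bound:
  assumes wf: "weight_fun M Cw w" and M: "M > 0" and T: "0 \<le> T" "T \<le> CT * M"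
    and x: "x \<in> {M/2..5*M/2}"
  shows "\<bar>deriv w x * sqrt (x + T) + 1 / (2 * sqrt (x + T)) * w x\<bar> \<le> (\<bar>Cw 1\<bar> * sqrt (5/2 + CT) + 1) / sqrt M"
proof -
  have pos: "x + T > 0"
    using x M T by auto
  have "sqrt (x + T) \<le> sqrt ((5/2 + CT) * M)"
    using x T by (intro real_sqrt_le_mono) (simp add: algebra_simps)
  then have "\<bar>deriv w x\<bar> * sqrt (x + T) \<le> \<bar>Cw 1\<bar> / M * (sqrt (5/2 + CT) * sqrt M)"
    using weight_fun_deriv_bound[OF wf M, of x] pos x M
    by (intro mult_mono) (auto simp: real_sqrt_mult)
  also have "\<dots> = \<bar>Cw 1\<bar> * sqrt (5/2 + CT) / sqrt M"
    using M by (simp add: field_simps)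
  finally have deriv_part: "\<bar>deriv w x * sqrt (x + T)\<bar> \<le> \<bar>Cw 1\<bar> * sqrt (5/2 + CT) / sqrt M"
    using pos by (simp add: abs_mult)
  have "sqrt M \<le> sqrt (4 * (x + T))"
    using x T M by (intro real_sqrt_le_mono) auto
  also have "\<dots> = 2 * sqrt (x + T)"
    by (simp only: real_sqrt_mult) simp
  finally have "1 / (2 * sqrt (x + T)) * w x \<le> 1 / sqrt M"
    using weight_fun_nonneg[OF wf] weight_fun_le_1[OF wf, of x] M
    by (simp add: divide_simps) (smt (verit) mult_left_le_one_le real_sqrt_gt_0_iff)
  moreover have "1 / (2 * sqrt (x + T)) * w x \<ge> 0"
    using weight_fun_nonneg[OF wf, of x] pos by simp
  ultimately show ?thesis
    using deriv_part by (simp add: add_divide_distrib abs_le_iff)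
qed

lemma norm_sqrt_phase_integral_le_inverse:
  assumes wf: "weight_fun M Cw w" and M: "M > 0" and T: "0 \<le> T" "T \<le> CT * M" and \<beta>: "\<beta> \<noteq> 0"
  shows "norm (sqrt_phase_integral M T w \<beta>)
           \<le> 2 * sqrt M * (\<bar>Cw 1\<bar> * sqrt (5/2 + CT) + 1) / (pi * \<bar>\<beta>\<bar>)"
proof -
  define D where "D = \<bar>Cw 1\<bar> * sqrt (5/2 + CT) + 1"
  define \<phi>' where "\<phi>' x = 1 / (2 * sqrt (x + T))" for x
  define p where "p x = 2 * (w x * sqrt (x + T))" for x
  define p' where "p' x = 2 * (deriv w x * sqrt (x + T) + \<phi>' x * w x)" for x
  have pos: "x + T > 0" if "x \<in> {M/2..5*M/2}" for x
    using that M T by auto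
  have \<phi>_deriv: "((\<lambda>x. sqrt (x + T)) has_real_derivative \<phi>' x) (at x)" if "x \<in> {M/2..5*M/2}" for x
    using pos[OF that] unfolding \<phi>'_def by (auto intro!: derivative_eq_intros simp: divide_simps)
  have p_deriv: "(p has_real_derivative p' x) (at x)" if "x \<in> {M/2..5*M/2}" for x
    unfolding p_def p'_def
    by (intro DERIV_cmult DERIV_mult weight_fun_has_derivative[OF wf] \<phi>_deriv that)
  have "continuous_on {M/2..5*M/2} \<phi>'"
    unfolding \<phi>'_def by (intro continuous_intros) (use pos in fastforce)
  moreover have "\<bar>p' x\<bar> \<le> 2 * D / sqrt M" if "x \<in> {M/2..5*M/2}" for x
  proof -
    have "\<bar>p' x\<bar> = 2 * \<bar>deriv w x * sqrt (x + T) + 1 / (2 * sqrt (x + T)) * w x\<bar>"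
      unfolding p'_def \<phi>'_def abs_mult by simp
    also have "\<dots> \<le> 2 * (D / sqrt M)"
      unfolding D_def by (intro mult_left_mono weight_fun_sqrt_deriv_bound[OF wf M T that]) simp
    finally show ?thesis
      by simp
  qed
  moreover have "p (M/2) = 0" "p (5*M/2) = 0"
    using weight_fun_endpoints[OF wf] by (simp_all add: p_def)
  ultimately have "norm (integral {M/2..5*M/2} (\<lambda>x. of_real (p x * \<phi>' x) * e (of_real (\<beta> * sqrt (x + T)))))
      \<le> (5*M/2 - M/2) * (2 * D / sqrt M) / (2 * pi * \<bar>\<beta>\<bar>)"
    using M \<beta> by (intro norm_integral_e_by_parts_le[where p' = p'] p_deriv \<phi>_deriv) auto
  also have "integral {M/2..5*M/2} (\<lambda>x. of_real (p x * \<phi>' x) * e (of_real (\<beta> * sqrt (x + T))))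
      = sqrt_phase_integral M T w \<beta>"
    unfolding sqrt_phase_integral_def
    by (intro integral_cong) (use pos in \<open>fastforce simp: p_def \<phi>'_def\<close>)
  also have "(5*M/2 - M/2) * (2 * D / sqrt M) / (2 * pi * \<bar>\<beta>\<bar>) = 2 * (M / sqrt M) * D / (pi * \<bar>\<beta>\<bar>)"
    by (simp add: field_simps)
  also have "M / sqrt M = sqrt M"
    using M by (simp add: real_div_sqrt)
  finally show ?thesis
    by (simp add: D_def)
qed

section \<open>The mean square of the exponential sum\<close>

lemma re_hermitian_form_le_row_sums:
  fixes b :: "'a \<Rightarrow> complex" and I :: "'a \<Rightarrow> 'a \<Rightarrow> complex" and J :: "'a \<Rightarrow> 'a \<Rightarrow> real"
  assumes "finite S"
    and I_le: "\<And>n m. n \<in> S \<Longrightarrow> m \<in> S \<Longrightarrow> norm (I n m) \<le> J n m"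
    and J_sym: "\<And>n m. J n m = J m n"
  shows "Re (\<Sum>n\<in>S. \<Sum>m\<in>S. b n * cnj (b m) * I n m) \<le> (\<Sum>n\<in>S. (norm (b n))\<^sup>2 * (\<Sum>m\<in>S. J n m))"
proof -
  have "Re (\<Sum>n\<in>S. \<Sum>m\<in>S. b n * cnj (b m) * I n m) \<le> norm (\<Sum>n\<in>S. \<Sum>m\<in>S. b n * cnj (b m) * I n m)"
    by (rule complex_Re_le_cmod)
  also have "\<dots> \<le> (\<Sum>n\<in>S. \<Sum>m\<in>S. norm (b n) * norm (b m) * J n m)"
    by (intro order_trans[OF norm_sum] sum_mono order_trans[OF norm_sum])
      (auto simp: norm_mult intro!: mult_left_mono I_le)
  also have "\<dots> \<le> (\<Sum>n\<in>S. \<Sum>m\<in>S. (norm (b n))\<^sup>2 / 2 * J n m + (norm (b m))\<^sup>2 / 2 * J n m)"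
  proof (intro sum_mono)
    fix n m assume "n \<in> S" "m \<in> S"
    then have "J n m \<ge> 0"
      using I_le norm_ge_zero order_trans by blast
    moreover have "norm (b n) * norm (b m) \<le> (norm (b n))\<^sup>2 / 2 + (norm (b m))\<^sup>2 / 2"
      using sum_squares_bound[of "norm (b n)" "norm (b m)"] by (simp add: power2_eq_square)
    ultimately show "norm (b n) * norm (b m) * J n m \<le> (norm (b n))\<^sup>2 / 2 * J n m + (norm (b m))\<^sup>2 / 2 * J n m"
      by (metis distrib_right mult_right_mono)
  qed
  also have "\<dots> = (\<Sum>n\<in>S. \<Sum>m\<in>S. (norm (b n))\<^sup>2 / 2 * J n m) + (\<Sum>n\<in>S. \<Sum>m\<in>S. (norm (b m))\<^sup>2 / 2 * J n m)"
    by (simp only: sum.distrib)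
  also have "(\<Sum>n\<in>S. \<Sum>m\<in>S. (norm (b m))\<^sup>2 / 2 * J n m) = (\<Sum>n\<in>S. \<Sum>m\<in>S. (norm (b n))\<^sup>2 / 2 * J n m)"
    by (subst sum.swap) (simp only: J_sym)
  also have "(\<Sum>n\<in>S. \<Sum>m\<in>S. (norm (b n))\<^sup>2 / 2 * J n m) + (\<Sum>n\<in>S. \<Sum>m\<in>S. (norm (b n))\<^sup>2 / 2 * J n m)
      = (\<Sum>n\<in>S. (norm (b n))\<^sup>2 * (\<Sum>m\<in>S. J n m))"
  proof -
    have inner: "(\<Sum>m\<in>S. (norm (b n))\<^sup>2 / 2 * J n m) = (norm (b n))\<^sup>2 / 2 * (\<Sum>m\<in>S. J n m)" for n
      by (simp add: sum_distrib_left)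
    show ?thesis
      unfolding inner sum.distrib[symmetric] by (intro sum.cong refl) (simp add: field_simps)
  qed
  finally show ?thesis .
qed

lemma integral_weight_norm_sum_sq:
  fixes b :: "'a \<Rightarrow> complex" and \<alpha> :: "'a \<Rightarrow> real"
  assumes wf: "weight_fun M Cw w" and "finite S"
  shows "integral {M/2..5*M/2} (\<lambda>x. w x * (norm (\<Sum>n\<in>S. b n * e (of_real (\<alpha> n * sqrt (x + T)))))\<^sup>2)
         = Re (\<Sum>n\<in>S. \<Sum>m\<in>S. b n * cnj (b m) * sqrt_phase_integral M T w (\<alpha> n - \<alpha> m))"
proof -
  define E where "E n x = e (of_real (\<alpha> n * sqrt (x + T)))" for n x
  define Z where "Z = (\<Sum>n\<in>S. \<Sum>m\<in>S. b n * cnj (b m) * sqrt_phase_integral M T w (\<alpha> n - \<alpha> m))"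
  have phase: "E n x * cnj (E m x) = e (of_real ((\<alpha> n - \<alpha> m) * sqrt (x + T)))" for n m x
    unfolding E_def e_mult_cnj_e by (simp add: left_diff_distrib)
  have pointwise: "of_real (w x * (norm (\<Sum>n\<in>S. b n * E n x))\<^sup>2)
      = (\<Sum>n\<in>S. \<Sum>m\<in>S. b n * cnj (b m) * (of_real (w x) * e (of_real ((\<alpha> n - \<alpha> m) * sqrt (x + T)))))" for x
  proof -
    have "of_real (w x * (norm (\<Sum>n\<in>S. b n * E n x))\<^sup>2)
        = of_real (w x) * ((\<Sum>n\<in>S. b n * E n x) * cnj (\<Sum>m\<in>S. b m * E m x))"
      by (simp only: of_real_mult complex_norm_square)
    also have "\<dots> = of_real (w x) * (\<Sum>n\<in>S. \<Sum>m\<in>S. (b n * E n x) * cnj (b m * E m x))"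
      by (simp only: cnj_sum sum_product)
    also have "\<dots> = (\<Sum>n\<in>S. \<Sum>m\<in>S. b n * cnj (b m) * (of_real (w x) * (E n x * cnj (E m x))))"
      by (simp add: sum_distrib_left ac_simps)
    finally show ?thesis
      by (simp only: phase)
  qed
  have "((\<lambda>x. complex_of_real (w x * (norm (\<Sum>n\<in>S. b n * E n x))\<^sup>2)) has_integral Z) {M/2..5*M/2}"
    unfolding pointwise Z_def
    by (intro has_integral_sum \<open>finite S\<close> has_integral_mult_right has_integral_sqrt_phase_integral[OF wf])
  from has_integral_linear[OF this bounded_linear_Re]
  have "((\<lambda>x. w x * (norm (\<Sum>n\<in>S. b n * E n x))\<^sup>2) has_integral Re Z) {M/2..5*M/2}"
    by (simp add: o_def)
  then show ?thesis
    unfolding Z_def E_def by (rule integral_unique)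
qed

lemma abs_diff_le_sqrt_mult_abs_diff_sqrt:
  fixes x y X :: real
  assumes "0 \<le> x" "0 \<le> y" "x \<le> X" "y \<le> X"
  shows "\<bar>x - y\<bar> \<le> 2 * sqrt X * \<bar>sqrt x - sqrt y\<bar>"
proof -
  have "x - y = (sqrt x - sqrt y) * (sqrt x + sqrt y)"
    using assms by (simp add: algebra_simps)
  then have "\<bar>x - y\<bar> = \<bar>sqrt x - sqrt y\<bar> * (sqrt x + sqrt y)"
    using assms by (simp add: abs_mult)
  also have "\<dots> \<le> \<bar>sqrt x - sqrt y\<bar> * (2 * sqrt X)"
  proof (rule mult_left_mono)
    show "sqrt x + sqrt y \<le> 2 * sqrt X"
      using real_sqrt_le_mono[OF \<open>x \<le> X\<close>] real_sqrt_le_mono[OF \<open>y \<le> X\<close>] by linarith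
  qed simp
  finally show ?thesis
    by (simp add: ac_simps)
qed

lemma harm_le_one_plus_ln: "N \<ge> 1 \<Longrightarrow> harm N \<le> 1 + ln (real N)"
  using euler_mascheroni_sequence_decreasing[of 1 N] by (simp add: harm_def)

lemma sum_inverse_dist_le_harm:
  fixes n N :: nat
  assumes "A \<subseteq> {..N}" "n \<le> N"
  shows "(\<Sum>m\<in>A - {n}. 1 / \<bar>real n - real m\<bar>) \<le> 2 * harm N"
proof -
  have "finite A"
    using assms(1) finite_subset by blast
  have harm: "harm N = (\<Sum>j\<in>{1..N}. 1 / real j)"
    by (simp add: harm_def divide_inverse)
  have below: "(\<Sum>m\<in>{m\<in>A. m < n}. 1 / \<bar>real n - real m\<bar>) \<le> harm N"
  proof -
    have "(\<Sum>m\<in>{m\<in>A. m < n}. 1 / \<bar>real n - real m\<bar>) = (\<Sum>j\<in>(\<lambda>m. n - m) ` {m\<in>A. m < n}. 1 / real j)"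
      by (subst sum.reindex) (auto simp: inj_on_def of_nat_diff intro!: sum.cong)
    also have "\<dots> \<le> harm N"
      unfolding harm using assms by (intro sum_mono2) (auto simp: subset_iff)
    finally show ?thesis .
  qed
  have above: "(\<Sum>m\<in>{m\<in>A. n < m}. 1 / \<bar>real n - real m\<bar>) \<le> harm N"
  proof -
    have "(\<Sum>m\<in>{m\<in>A. n < m}. 1 / \<bar>real n - real m\<bar>) = (\<Sum>j\<in>(\<lambda>m. m - n) ` {m\<in>A. n < m}. 1 / real j)"
      by (subst sum.reindex) (auto simp: inj_on_def of_nat_diff intro!: sum.cong)
    also have "\<dots> \<le> harm N"
      unfolding harm using assms by (intro sum_mono2) (auto simp: subset_iff)
    finally show ?thesis .
  qed
  have "A - {n} = {m\<in>A. m < n} \<union> {m\<in>A. n < m}"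
    by auto
  then have "(\<Sum>m\<in>A - {n}. 1 / \<bar>real n - real m\<bar>)
      = (\<Sum>m\<in>{m\<in>A. m < n}. 1 / \<bar>real n - real m\<bar>) + (\<Sum>m\<in>{m\<in>A. n < m}. 1 / \<bar>real n - real m\<bar>)"
    using \<open>finite A\<close> by (simp add: sum.union_disjoint disjoint_iff)
  then show ?thesis
    using below above by simp
qed

lemma sum_dyadic_if_diag_le:
  assumes L: "L \<ge> 1/2" and n: "n \<in> dyadic L" and "B \<ge> 0"
  shows "(\<Sum>m\<in>dyadic L. if n = m then D else B / \<bar>real n - real m\<bar>) \<le> D + 2 * B * (1 + ln (2 * L))"
proof -
  define N where "N = nat \<lfloor>2 * L\<rfloor>"
  have "N \<ge> 1" "real N \<le> 2 * L"
    using L by (auto simp: N_def le_nat_iff le_floor_iff)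
  have "(\<Sum>m\<in>dyadic L - {n}. 1 / \<bar>real n - real m\<bar>) \<le> 2 * harm N"
    using dyadic_subset_atMost[of L] n by (intro sum_inverse_dist_le_harm) (auto simp: N_def)
  also have "harm N \<le> 1 + ln (real N)"
    by (rule harm_le_one_plus_ln[OF \<open>N \<ge> 1\<close>])
  also have "ln (real N) \<le> ln (2 * L)"
    using \<open>real N \<le> 2 * L\<close> \<open>N \<ge> 1\<close> by simp
  finally have "B * (\<Sum>m\<in>dyadic L - {n}. 1 / \<bar>real n - real m\<bar>) \<le> B * (2 * (1 + ln (2 * L)))"
    using \<open>B \<ge> 0\<close> by (intro mult_left_mono) auto
  moreover have "(\<Sum>m\<in>dyadic L. if n = m then D else B / \<bar>real n - real m\<bar>)
      = D + B * (\<Sum>m\<in>dyadic L - {n}. 1 / \<bar>real n - real m\<bar>)"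
    using n by (simp add: sum.remove sum_distrib_left)
  ultimately show ?thesis
    by (simp add: algebra_simps)
qed

definition twisted_coeff :: "(nat \<Rightarrow> complex) \<Rightarrow> int \<Rightarrow> int \<Rightarrow> nat \<Rightarrow> complex" where
  "twisted_coeff a hb k n = a n * of_real (real n powr (-3/4)) * e (of_real (- real n * real_of_int hb / real_of_int k))"

definition sqrt_freq :: "real \<Rightarrow> int \<Rightarrow> nat \<Rightarrow> real" where
  "sqrt_freq s k n = s * 2 * sqrt (real n) / real_of_int k"

lemma exp_sum_eq_sum_twisted_coeff:
  "exp_sum a hb k T s L x
     = (\<Sum>n\<in>dyadic L. twisted_coeff a hb k n * e (of_real (sqrt_freq s k n * sqrt (x + T))))"
proof -
  have "s * 2 * sqrt (real n * (x + T)) / real_of_int k = sqrt_freq s k n * sqrt (x + T)" for n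
    by (simp add: sqrt_freq_def real_sqrt_mult)
  then show ?thesis
    unfolding exp_sum_def dyadic_def twisted_coeff_def by simp
qed

lemma mean_square_eq_hermitian_form:
  assumes "weight_fun M Cw w"
  shows "mean_square a hb k T s L M w
           = Re (\<Sum>n\<in>dyadic L. \<Sum>m\<in>dyadic L. twisted_coeff a hb k n * cnj (twisted_coeff a hb k m)
                   * sqrt_phase_integral M T w (sqrt_freq s k n - sqrt_freq s k m))"
  unfolding mean_square_def exp_sum_eq_sum_twisted_coeff
  by (rule integral_weight_norm_sum_sq[OF assms finite_dyadic])

lemma sum_norm_twisted_coeff_sq_le:
  assumes "L > 0"
  shows "(\<Sum>n\<in>dyadic L. (norm (twisted_coeff a hb k n))\<^sup>2) \<le> L powr (-3/2) * (\<Sum>n\<in>dyadic L. (norm (a n))\<^sup>2)"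
  unfolding sum_distrib_left
proof (rule sum_mono)
  fix n assume "n \<in> dyadic L"
  then have "L < real n"
    by (simp add: dyadic_def)
  have "norm (twisted_coeff a hb k n) = norm (a n) * real n powr (-3/4)"
    by (simp add: twisted_coeff_def norm_mult norm_e)
  moreover have "(real n powr (-3/4))\<^sup>2 = real n powr (-3/2)"
    by (simp add: power2_eq_square flip: powr_add)
  ultimately have "(norm (twisted_coeff a hb k n))\<^sup>2 = real n powr (-3/2) * (norm (a n))\<^sup>2"
    by (simp add: power_mult_distrib)
  also have "\<dots> \<le> L powr (-3/2) * (norm (a n))\<^sup>2"
    using \<open>L < real n\<close> assms by (intro mult_right_mono powr_mono2') auto
  finally show "(norm (twisted_coeff a hb k n))\<^sup>2 \<le> L powr (-3/2) * (norm (a n))\<^sup>2" .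
qed

lemma sqrt_mult_powr_neg_half:
  fixes M L :: real
  assumes "L > 0"
  shows "sqrt (M * L) * L powr (-1/2) = sqrt M"
proof -
  have "sqrt L = L powr (1/2)"
    using assms by (simp add: powr_half_sqrt)
  then have "sqrt L * L powr (-1/2) = L powr (1/2 + -1/2)"
    by (simp only: powr_add)
  then have "sqrt L * L powr (-1/2) = 1"
    using assms by simp
  then show ?thesis
    by (simp add: real_sqrt_mult mult.assoc)
qed

lemma norm_sqrt_phase_integral_sqrt_freq_diff_le:
  assumes wf: "weight_fun M Cw w" and M: "M > 0" and T: "0 \<le> T" "T \<le> CT * M"
    and k: "k > 0" and s: "s \<in> {1, -1}"
    and nm: "real n \<le> 2 * L" "real m \<le> 2 * L" "n \<noteq> m"
  shows "norm (sqrt_phase_integral M T w (sqrt_freq s k n - sqrt_freq s k m))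
           \<le> 2 * sqrt 2 / pi * (\<bar>Cw 1\<bar> * sqrt (5/2 + CT) + 1) * real_of_int k * sqrt (M * L)
              / \<bar>real n - real m\<bar>"
proof -
  define D where "D = \<bar>Cw 1\<bar> * sqrt (5/2 + CT) + 1"
  define \<delta> where "\<delta> = \<bar>sqrt (real n) - sqrt (real m)\<bar>"
  have "\<delta> > 0"
    using nm(3) by (simp add: \<delta>_def)
  have "0 \<le> CT * M"
    using T by linarith
  then have "D \<ge> 0"
    using M by (simp add: D_def zero_le_mult_iff)
  define \<beta> where "\<beta> = sqrt_freq s k n - sqrt_freq s k m"
  have abs_\<beta>: "\<bar>\<beta>\<bar> = 2 * \<delta> / real_of_int k"
    using k s by (auto simp: \<beta>_def \<delta>_def sqrt_freq_def abs_mult abs_divide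
        simp flip: diff_divide_distrib right_diff_distrib)
  then have "\<beta> \<noteq> 0"
    using \<open>\<delta> > 0\<close> k by auto
  from norm_sqrt_phase_integral_le_inverse[OF wf M T this]
  have "norm (sqrt_phase_integral M T w \<beta>) \<le> 2 * sqrt M * D / (pi * (2 * \<delta> / real_of_int k))"
    unfolding abs_\<beta> D_def .
  also have "\<dots> = sqrt M * D * real_of_int k / pi * (1 / \<delta>)"
    using k \<open>\<delta> > 0\<close> by (simp add: field_simps)
  also have "\<dots> \<le> sqrt M * D * real_of_int k / pi * (2 * sqrt (2 * L) / \<bar>real n - real m\<bar>)"
  proof (rule mult_left_mono)
    have "\<bar>real n - real m\<bar> \<le> 2 * sqrt (2 * L) * \<delta>"
      unfolding \<delta>_def using nm by (intro abs_diff_le_sqrt_mult_abs_diff_sqrt) auto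
    then show "1 / \<delta> \<le> 2 * sqrt (2 * L) / \<bar>real n - real m\<bar>"
      using \<open>\<delta> > 0\<close> nm(3) by (simp add: field_simps)
  qed (use \<open>D \<ge> 0\<close> k M in simp)
  also have "\<dots> = 2 * sqrt 2 / pi * D * real_of_int k * sqrt (M * L) / \<bar>real n - real m\<bar>"
    by (simp add: real_sqrt_mult field_simps)
  finally show ?thesis
    unfolding \<beta>_def D_def .
qed

lemma mean_square_le_sum_norm_sq_mult:
  assumes M: "M \<ge> 1" and L: "L \<ge> 1/2" and T: "0 \<le> T" "T \<le> CT * M" and k: "k > 0"
    and wf: "weight_fun M Cw w" and s: "s \<in> {1, -1}"
  defines "B \<equiv> 2 * sqrt 2 / pi * (\<bar>Cw 1\<bar> * sqrt (5/2 + CT) + 1) * real_of_int k * sqrt (M * L)"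
  shows "mean_square a hb k T s L M w
           \<le> (\<Sum>n\<in>dyadic L. (norm (twisted_coeff a hb k n))\<^sup>2) * (2 * M + 2 * B * (1 + ln (2 * L)))"
proof -
  define b where "b = twisted_coeff a hb k"
  define J where "J n m = (if n = m then 2 * M else B / \<bar>real n - real m\<bar>)" for n m :: nat
  have "0 \<le> CT * M"
    using T by linarith
  then have "B \<ge> 0"
    using M k L by (simp add: B_def zero_le_mult_iff)
  have "mean_square a hb k T s L M w
      = Re (\<Sum>n\<in>dyadic L. \<Sum>m\<in>dyadic L. b n * cnj (b m)
              * sqrt_phase_integral M T w (sqrt_freq s k n - sqrt_freq s k m))"
    unfolding b_def by (rule mean_square_eq_hermitian_form[OF wf])
  also have "\<dots> \<le> (\<Sum>n\<in>dyadic L. (norm (b n))\<^sup>2 * (\<Sum>m\<in>dyadic L. J n m))"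
  proof (rule re_hermitian_form_le_row_sums)
    fix n m assume "n \<in> dyadic L" "m \<in> dyadic L"
    show "norm (sqrt_phase_integral M T w (sqrt_freq s k n - sqrt_freq s k m)) \<le> J n m"
    proof (cases "n = m")
      case True
      then show ?thesis
        using norm_sqrt_phase_integral_le[OF wf] M by (simp add: J_def)
    next
      case False
      have "real n \<le> 2 * L" "real m \<le> 2 * L"
        using \<open>n \<in> dyadic L\<close> \<open>m \<in> dyadic L\<close> by (simp_all add: dyadic_def)
      from norm_sqrt_phase_integral_sqrt_freq_diff_le[OF wf _ T k s this False] M
      show ?thesis
        unfolding J_def B_def using False by simp
    qed
  qed (auto simp: J_def abs_minus_commute)
  also have "\<dots> \<le> (\<Sum>n\<in>dyadic L. (norm (b n))\<^sup>2 * (2 * M + 2 * B * (1 + ln (2 * L))))"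
    unfolding J_def using sum_dyadic_if_diag_le[OF L _ \<open>B \<ge> 0\<close>]
    by (intro sum_mono mult_left_mono) auto
  also have "\<dots> = (\<Sum>n\<in>dyadic L. (norm (b n))\<^sup>2) * (2 * M + 2 * B * (1 + ln (2 * L)))"
    by (rule sum_distrib_right[symmetric])
  finally show ?thesis
    unfolding b_def .
qed

lemma mean_square_le:
  fixes a :: "nat \<Rightarrow> complex" and hb k :: int
  assumes coeff: "(\<Sum>n\<in>dyadic L. (norm (a n))\<^sup>2) \<le> A * L"
    and M: "M \<ge> 1" and L: "L \<ge> 1/2" and T: "0 \<le> T" "T \<le> CT * M" and k: "k > 0"
    and wf: "weight_fun M Cw w" and s: "s \<in> {1, -1}"
  defines "K \<equiv> 2 * sqrt 2 / pi * (\<bar>Cw 1\<bar> * sqrt (5/2 + CT) + 1)"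
  shows "mean_square a hb k T s L M w
           \<le> A * (2 * M * L powr (-1/2) + 2 * K * real_of_int k * sqrt M * (1 + ln (2 * L)))"
proof -
  define B where "B = K * real_of_int k * sqrt (M * L)"
  have "0 \<le> CT * M"
    using T by linarith
  then have "B \<ge> 0"
    using M k L by (simp add: B_def K_def zero_le_mult_iff)
  have "mean_square a hb k T s L M w
      \<le> (\<Sum>n\<in>dyadic L. (norm (twisted_coeff a hb k n))\<^sup>2) * (2 * M + 2 * B * (1 + ln (2 * L)))"
    using mean_square_le_sum_norm_sq_mult[OF M L T k wf s] unfolding B_def K_def .
  also have "\<dots> \<le> (A * L powr (-1/2)) * (2 * M + 2 * B * (1 + ln (2 * L)))"
  proof (rule mult_right_mono)
    have "(\<Sum>n\<in>dyadic L. (norm (twisted_coeff a hb k n))\<^sup>2) \<le> L powr (-3/2) * (\<Sum>n\<in>dyadic L. (norm (a n))\<^sup>2)"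
      using L by (intro sum_norm_twisted_coeff_sq_le) simp
    also have "\<dots> \<le> L powr (-3/2) * (A * L)"
      by (rule mult_left_mono[OF coeff]) simp
    also have "L powr (-3/2) * (A * L) = A * L powr (-1/2)"
      using L powr_add[of L 1 "-3/2"] by simp
    finally show "(\<Sum>n\<in>dyadic L. (norm (twisted_coeff a hb k n))\<^sup>2) \<le> A * L powr (-1/2)" .
    show "0 \<le> 2 * M + 2 * B * (1 + ln (2 * L))"
      using M L \<open>B \<ge> 0\<close> by (intro add_nonneg_nonneg mult_nonneg_nonneg) auto
  qed
  also have "\<dots> = A * (2 * M * L powr (-1/2) + 2 * K * real_of_int k * (sqrt (M * L) * L powr (-1/2)) * (1 + ln (2 * L)))"
    by (simp add: B_def ring_distribs mult_ac)
  also have "sqrt (M * L) * L powr (-1/2) = sqrt M"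
    using L by (intro sqrt_mult_powr_neg_half) simp
  finally show ?thesis .
qed

lemma one_plus_ln_le_powr:
  fixes L d :: real
  assumes L: "L \<ge> 1/2" and d: "d > 0"
  shows "1 + ln (2 * L) \<le> 2 powr d * (1 + 1 / d) * L powr d"
proof -
  have "1 \<le> (2 * L) powr d"
    using L d by (simp add: ge_one_powr_ge_zero)
  moreover have "d * ln (2 * L) \<le> (2 * L) powr d - 1"
    using L ln_le_minus_one[of "(2 * L) powr d"] by (simp add: ln_powr)
  then have "ln (2 * L) \<le> (2 * L) powr d / d"
    using d by (simp add: le_divide_eq mult.commute)
  ultimately have "1 + ln (2 * L) \<le> (2 * L) powr d + (2 * L) powr d / d"
    by linarith
  also have "\<dots> = 2 powr d * (1 + 1 / d) * L powr d"
    using L by (simp add: powr_mult field_simps)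
  finally show ?thesis .
qed

lemma mult_powr_le_of_le_powr:
  fixes k M L \<theta> CL :: real
  assumes k: "k \<ge> 1" and M: "M \<ge> 1" and L: "L > 0" and \<theta>: "\<theta> > 0"
    and L_le: "L \<le> CL * M powr (1 - \<theta>) * k powr (-2)"
  shows "k * L powr (1/2 + \<theta>/2) \<le> CL powr (1/2 + \<theta>/2) * sqrt M"
proof -
  define p where "p = 1/2 + \<theta>/2"
  have "p > 0"
    using \<theta> by (simp add: p_def)
  have "CL > 0"
    using L_le L M k by (smt (verit) mult_nonpos_nonneg powr_ge_zero)
  have "k * L powr p \<le> k * (CL * M powr (1 - \<theta>) * k powr (-2)) powr p"
    using L_le L k \<open>p > 0\<close> by (intro mult_left_mono powr_mono2) auto
  also have "\<dots> = CL powr p * M powr ((1 - \<theta>) * p) * (k powr 1 * k powr (-2 * p))"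
    using \<open>CL > 0\<close> k by (simp add: powr_mult powr_powr)
  also have "k powr 1 * k powr (-2 * p) = k powr (- \<theta>)"
    by (simp only: powr_add[symmetric]) (simp add: p_def)
  also have "CL powr p * M powr ((1 - \<theta>) * p) * k powr (- \<theta>) \<le> CL powr p * M powr (1/2) * 1"
  proof (intro mult_mono mult_left_mono)
    show "M powr ((1 - \<theta>) * p) \<le> M powr (1/2)"
      using M \<theta> by (intro powr_mono) (auto simp: p_def field_simps)
    show "k powr (- \<theta>) \<le> 1"
      using k \<theta> by (simp add: powr_minus field_simps ge_one_powr_ge_zero)
  qed auto
  also have "\<dots> = CL powr (1/2 + \<theta>/2) * sqrt M"
    using M by (simp add: p_def powr_half_sqrt)
  finally show ?thesis
    by (simp add: p_def)
qed

lemma mean_square_le_of_log_term_le: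
  fixes a :: "nat \<Rightarrow> complex" and hb k :: int and CT :: real and Cw :: "nat \<Rightarrow> real"
  defines "K \<equiv> 2 * sqrt 2 / pi * (\<bar>Cw 1\<bar> * sqrt (5/2 + CT) + 1)"
  assumes coeff: "\<And>L. L > 0 \<Longrightarrow> (\<Sum>n\<in>dyadic L. (norm (a n))\<^sup>2) \<le> A * L"
    and M: "M \<ge> 1" and L: "L \<ge> 1/2" and T: "0 \<le> T" "T \<le> CT * M" and k: "k > 0"
    and wf: "weight_fun M Cw w" and s: "s \<in> {1, -1}"
    and log_le: "2 * K * real_of_int k * sqrt M * (1 + ln (2 * L)) \<le> X"
  shows "mean_square a hb k T s L M w \<le> A * (2 * (M * L powr (-1/2)) + X)"
proof -
  have "L > 0"
    using L by simp
  have "A \<ge> 0"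
    using coeff[of 1] sum_nonneg[of "dyadic 1" "\<lambda>n. (norm (a n))\<^sup>2"] by simp
  have "mean_square a hb k T s L M w
      \<le> A * (2 * M * L powr (-1/2) + 2 * K * real_of_int k * sqrt M * (1 + ln (2 * L)))"
    using mean_square_le[OF coeff[OF \<open>L > 0\<close>] M L T k wf s] unfolding K_def .
  also have "\<dots> \<le> A * (2 * (M * L powr (-1/2)) + X)"
    using \<open>A \<ge> 0\<close> log_le by (intro mult_left_mono) auto
  finally show ?thesis .
qed

lemma mean_square_le_eps:
  fixes a :: "nat \<Rightarrow> complex" and hb k :: int
  assumes coeff: "\<And>L. L > 0 \<Longrightarrow> (\<Sum>n\<in>dyadic L. (norm (a n))\<^sup>2) \<le> A * L" and \<epsilon>: "\<epsilon> > 0"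
    and M: "M \<ge> 1" and L: "L \<ge> 1/2" and T: "0 \<le> T" "T \<le> CT * M" and k: "k > 0"
    and wf: "weight_fun M Cw w" and s: "s \<in> {1, -1}"
  defines "K \<equiv> 2 * sqrt 2 / pi * (\<bar>Cw 1\<bar> * sqrt (5/2 + CT) + 1)"
  shows "mean_square a hb k T s L M w
           \<le> A * (2 + 2 * K * (2 powr \<epsilon> * (1 + 1 / \<epsilon>)))
               * (M * L powr (-1/2) + L powr \<epsilon> * real_of_int k * M powr (1/2 + \<epsilon>))"
proof -
  define C\<epsilon> where "C\<epsilon> = 2 powr \<epsilon> * (1 + 1 / \<epsilon>)"
  have "A \<ge> 0"
    using coeff[of 1] sum_nonneg[of "dyadic 1" "\<lambda>n. (norm (a n))\<^sup>2"] by simp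
  have "0 \<le> CT * M"
    using T by linarith
  then have "K \<ge> 0"
    using M by (simp add: K_def zero_le_mult_iff)
  have "sqrt M \<le> M powr (1/2 + \<epsilon>)"
    using M \<epsilon> by (simp add: powr_half_sqrt[symmetric] powr_mono)
  then have "2 * K * real_of_int k * sqrt M * (1 + ln (2 * L))
      \<le> 2 * K * real_of_int k * M powr (1/2 + \<epsilon>) * (C\<epsilon> * L powr \<epsilon>)"
    using one_plus_ln_le_powr[OF L \<epsilon>] \<open>K \<ge> 0\<close> k L
    by (intro mult_mono mult_left_mono) (auto simp: C\<epsilon>_def)
  also have "\<dots> = 2 * K * C\<epsilon> * (L powr \<epsilon> * real_of_int k * M powr (1/2 + \<epsilon>))"
    by (simp add: ac_simps)
  finally have log_le: "2 * K * real_of_int k * sqrt M * (1 + ln (2 * L))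
      \<le> 2 * K * C\<epsilon> * (L powr \<epsilon> * real_of_int k * M powr (1/2 + \<epsilon>))" .
  have "mean_square a hb k T s L M w
      \<le> A * (2 * (M * L powr (-1/2)) + 2 * K * C\<epsilon> * (L powr \<epsilon> * real_of_int k * M powr (1/2 + \<epsilon>)))"
    using mean_square_le_of_log_term_le[OF coeff M L T k wf s log_le[unfolded K_def]] unfolding K_def .
  also have "\<dots> \<le> A * ((2 + 2 * K * C\<epsilon>) * (M * L powr (-1/2) + L powr \<epsilon> * real_of_int k * M powr (1/2 + \<epsilon>)))"
  proof (rule mult_left_mono[OF _ \<open>A \<ge> 0\<close>])
    have "2 * x + c * y \<le> (2 + c) * (x + y)" if "0 \<le> x" "0 \<le> y" "0 \<le> c" for x y c :: real
      using that by (simp add: algebra_simps)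
    then show "2 * (M * L powr (-1/2)) + 2 * K * C\<epsilon> * (L powr \<epsilon> * real_of_int k * M powr (1/2 + \<epsilon>))
        \<le> (2 + 2 * K * C\<epsilon>) * (M * L powr (-1/2) + L powr \<epsilon> * real_of_int k * M powr (1/2 + \<epsilon>))"
      using M k \<open>K \<ge> 0\<close> \<epsilon> by (simp add: C\<epsilon>_def)
  qed
  also have "\<dots> = A * (2 + 2 * K * C\<epsilon>) * (M * L powr (-1/2) + L powr \<epsilon> * real_of_int k * M powr (1/2 + \<epsilon>))"
    by (rule mult.assoc[symmetric])
  finally show ?thesis
    unfolding C\<epsilon>_def .
qed

lemma mean_square_le_theta:
  fixes a :: "nat \<Rightarrow> complex" and hb k :: int
  assumes coeff: "\<And>L. L > 0 \<Longrightarrow> (\<Sum>n\<in>dyadic L. (norm (a n))\<^sup>2) \<le> A * L" and \<theta>: "\<theta> > 0"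
    and M: "M \<ge> 1" and L: "L \<ge> 1/2" and T: "0 \<le> T" "T \<le> CT * M" and k: "k > 0"
    and wf: "weight_fun M Cw w" and s: "s \<in> {1, -1}"
    and L_le: "L \<le> CL * M powr (1 - \<theta>) * real_of_int k powr (-2)"
  defines "K \<equiv> 2 * sqrt 2 / pi * (\<bar>Cw 1\<bar> * sqrt (5/2 + CT) + 1)"
  shows "mean_square a hb k T s L M w
           \<le> A * (2 + 2 * K * (2 powr (\<theta>/2) * (1 + 2 / \<theta>)) * CL powr (1/2 + \<theta>/2)) * (M * L powr (-1/2))"
proof -
  define C\<theta> where "C\<theta> = 2 powr (\<theta>/2) * (1 + 2 / \<theta>)"
  have "0 \<le> CT * M"
    using T by linarith
  then have "K \<ge> 0"
    using M by (simp add: K_def zero_le_mult_iff)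
  have "1 + ln (2 * L) \<le> C\<theta> * L powr (\<theta>/2)"
    using one_plus_ln_le_powr[OF L, of "\<theta>/2"] \<theta> by (simp add: C\<theta>_def)
  have "real_of_int k * L powr (\<theta>/2) = real_of_int k * L powr (1/2 + \<theta>/2) * L powr (-1/2)"
    using L by (simp flip: powr_add)
  also have "\<dots> \<le> CL powr (1/2 + \<theta>/2) * sqrt M * L powr (-1/2)"
    using mult_powr_le_of_le_powr[of "real_of_int k" M L \<theta> CL] k M L \<theta> L_le
    by (intro mult_right_mono) auto
  finally have k_le: "real_of_int k * L powr (\<theta>/2) \<le> CL powr (1/2 + \<theta>/2) * sqrt M * L powr (-1/2)" .
  have "2 * K * real_of_int k * sqrt M * (1 + ln (2 * L))
      \<le> 2 * K * real_of_int k * sqrt M * (C\<theta> * L powr (\<theta>/2))"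
    using \<open>1 + ln (2 * L) \<le> C\<theta> * L powr (\<theta>/2)\<close> \<open>K \<ge> 0\<close> k M by (intro mult_left_mono) auto
  also have "\<dots> = 2 * K * C\<theta> * sqrt M * (real_of_int k * L powr (\<theta>/2))"
    by (simp add: ac_simps)
  also have "\<dots> \<le> 2 * K * C\<theta> * sqrt M * (CL powr (1/2 + \<theta>/2) * sqrt M * L powr (-1/2))"
    using k_le \<open>K \<ge> 0\<close> \<theta> M by (intro mult_left_mono) (auto simp: C\<theta>_def)
  also have "\<dots> = 2 * K * C\<theta> * CL powr (1/2 + \<theta>/2) * (M * L powr (-1/2))"
    using M by (simp add: ac_simps real_sqrt_mult[symmetric])
  finally have log_le: "2 * K * real_of_int k * sqrt M * (1 + ln (2 * L))
      \<le> 2 * K * C\<theta> * CL powr (1/2 + \<theta>/2) * (M * L powr (-1/2))" .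
  have "mean_square a hb k T s L M w
      \<le> A * (2 * (M * L powr (-1/2)) + 2 * K * C\<theta> * CL powr (1/2 + \<theta>/2) * (M * L powr (-1/2)))"
    using mean_square_le_of_log_term_le[OF coeff M L T k wf s log_le[unfolded K_def]] unfolding K_def .
  also have "\<dots> = A * (2 + 2 * K * C\<theta> * CL powr (1/2 + \<theta>/2)) * (M * L powr (-1/2))"
    by (simp add: algebra_simps)
  finally show ?thesis
    unfolding C\<theta>_def .
qed

theorem lemma3:
  fixes \<kappa> :: nat and F :: "complex \<Rightarrow> complex" and a :: "nat \<Rightarrow> complex"
  assumes "is_cusp_form \<kappa> F a"
  shows
   "(\<forall>\<epsilon>>0. \<forall>(CT::real) (Cw::nat \<Rightarrow> real). \<exists>C::real.
       \<forall>(M::real) (L::real) (T::real) (h::int) (k::int) (hb::int) (w::real \<Rightarrow> real) (s::real).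
         1 \<le> M \<longrightarrow> 1/2 \<le> L \<longrightarrow> 0 \<le> T \<longrightarrow> T \<le> CT * M \<longrightarrow>
         0 < k \<longrightarrow> coprime h k \<longrightarrow> [h * hb = 1] (mod k) \<longrightarrow>
         weight_fun M Cw w \<longrightarrow> s \<in> {1, -1} \<longrightarrow>
         mean_square a hb k T s L M w
           \<le> C * (M * L powr (-1/2) + L powr \<epsilon> * real_of_int k * M powr (1/2 + \<epsilon>)))
    \<and>
    (\<forall>\<theta>>0. \<forall>(CT::real) (CL::real) (Cw::nat \<Rightarrow> real). \<exists>C::real.
       \<forall>(M::real) (L::real) (T::real) (h::int) (k::int) (hb::int) (w::real \<Rightarrow> real) (s::real).
         1 \<le> M \<longrightarrow> 1/2 \<le> L \<longrightarrow> 0 \<le> T \<longrightarrow> T \<le> CT * M \<longrightarrow>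
         0 < k \<longrightarrow> coprime h k \<longrightarrow> [h * hb = 1] (mod k) \<longrightarrow>
         weight_fun M Cw w \<longrightarrow> s \<in> {1, -1} \<longrightarrow>
         L \<le> CL * M powr (1 - \<theta>) * real_of_int k powr (-2) \<longrightarrow>
         mean_square a hb k T s L M w \<le> C * (M * L powr (-1/2)))"
proof -
  obtain A where A: "\<And>L. L > 0 \<Longrightarrow> (\<Sum>n\<in>dyadic L. (norm (a n))\<^sup>2) \<le> A * L"
    using cusp_form_dyadic_sum_sq_le[OF assms] by blast
  show ?thesis
    apply (intro conjI allI impI)
    subgoal for \<epsilon> CT Cw
      apply (rule exI, intro allI impI)
      apply (rule mean_square_le_eps[where \<epsilon> = \<epsilon> and CT = CT and Cw = Cw])
      by (assumption | rule A)+
    subgoal for \<theta> CT CL Cw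
      apply (rule exI, intro allI impI)
      apply (rule mean_square_le_theta[where \<theta> = \<theta> and CT = CT and CL = CL and Cw = Cw])
      by (assumption | rule A)+
    done
qed

end
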